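(* Let $G=G_+G_-$ be a unique factorization of a finite group $G$, and let $R\in H(G;G_+,G_-)\otimes H(G;G_+,G_-)$ be invertible and positive, with $R^{-1}$ also positive. Then there exist a subset $\mathcal R\subset G\times G$ and a function $r:\mathcal R\to\mathbb R_{>0}$ such that (1) the restriction of the map $G\times G\to G_+\times G_+$, $(g,h)\mapsto(g_+,h_+)$, to $\mathcal R$ is a bijection onto $G_+\times G_+$; and (2) $R=\sum_{(g,h)\in\mathcal R} r(g,h)\,\{g\}\otimes\{h\}$.
   Context: A unique factorization $G=G_+G_-$ consists of subgroups $G_+,G_-$ such that every $g\in G$ is uniquely $g=g_+g_-$ with $g_+\in G_+$, $g_-\in G_-$. For $u\in G_+$, $x\in G_-$ define ${}^u x\in G_-$, $u^x\in G_+$, ${}^x u\in G_+$, $x^u\in G_-$ by $ux=({}^u x)(u^x)$ and $xu=({}^x u)(x^u)$. $H(G;G_+,G_-)$ is the complex vector space with basis $\{g\}$, $g\in G$, and Hopf algebra structure: $\{g\}\{h\}=\delta_{g_+^{\,g_-},\,h_+}\{g h_-\}$; unit $1=\sum_{u\in G_+}\{u\}$; $\Delta\{g\}=\sum_{h\in G_+}\{g_+h^{-1}({}^{h}g_-)\}\otimes\{h g_-\}$; $\varepsilon\{g\}=\delta_{g_+,e}$; $S\{g\}=\{g^{-1}\}$. An element of $H(G;G_+,G_-)\otimes H(G;G_+,G_-)$ is positive if it is a linear combination of the $\{g\}\otimes\{h\}$ with non-negative real coefficients. *)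

theory Defs
  imports Complex_Main "HOL-Algebra.Group"
begin

definition unique_factorization :: "('a, 'b) monoid_scheme \<Rightarrow> 'a set \<Rightarrow> 'a set \<Rightarrow> bool" where
  "unique_factorization G Gp Gm \<longleftrightarrow> subgroup Gp G \<and> subgroup Gm G \<and>
     (\<forall>g\<in>carrier G. \<exists>!p. fst p \<in> Gp \<and> snd p \<in> Gm \<and> g = fst p \<otimes>\<^bsub>G\<^esub> snd p)"

definition uf_plus :: "('a, 'b) monoid_scheme \<Rightarrow> 'a set \<Rightarrow> 'a set \<Rightarrow> 'a \<Rightarrow> 'a" where
  "uf_plus G Gp Gm g = (THE u. u \<in> Gp \<and> (\<exists>x\<in>Gm. g = u \<otimes>\<^bsub>G\<^esub> x))"

definition uf_minus :: "('a, 'b) monoid_scheme \<Rightarrow> 'a set \<Rightarrow> 'a set \<Rightarrow> 'a \<Rightarrow> 'a" where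
  "uf_minus G Gp Gm g = (THE x. x \<in> Gm \<and> (\<exists>u\<in>Gp. g = u \<otimes>\<^bsub>G\<^esub> x))"

text \<open>For u in G_+ and x in G_-: u x = (^u x)(u^x) with ^u x in G_-, u^x in G_+;
  uf_ract gives u^x.\<close>
definition uf_ract :: "('a, 'b) monoid_scheme \<Rightarrow> 'a set \<Rightarrow> 'a set \<Rightarrow> 'a \<Rightarrow> 'a \<Rightarrow> 'a" where
  "uf_ract G Gp Gm u x = (THE v. v \<in> Gp \<and> (\<exists>y\<in>Gm. u \<otimes>\<^bsub>G\<^esub> x = y \<otimes>\<^bsub>G\<^esub> v))"

text \<open>Elements of H \<otimes> H are coefficient functions on G \<times> G w.r.t. the basis {g}\<otimes>{h}.\<close>
definition ht_elem :: "('a, 'b) monoid_scheme \<Rightarrow> ('a \<times> 'a \<Rightarrow> complex) \<Rightarrow> bool" where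
  "ht_elem G A \<longleftrightarrow> (\<forall>p. p \<notin> carrier G \<times> carrier G \<longrightarrow> A p = 0)"

text \<open>Product in H(G;G_+,G_-) \<otimes> H(G;G_+,G_-), extended bilinearly from
  ({g1}\<otimes>{g2})({h1}\<otimes>{h2}) = {g1}{h1} \<otimes> {g2}{h2}, with
  {g}{h} = \<delta>_{g_+^{g_-}, h_+} {g h_-}.\<close>
definition ht_mult :: "('a, 'b) monoid_scheme \<Rightarrow> 'a set \<Rightarrow> 'a set \<Rightarrow>
    ('a \<times> 'a \<Rightarrow> complex) \<Rightarrow> ('a \<times> 'a \<Rightarrow> complex) \<Rightarrow> ('a \<times> 'a \<Rightarrow> complex)" where
  "ht_mult G Gp Gm A B = (\<lambda>(k1, k2).
     \<Sum>g1\<in>carrier G. \<Sum>g2\<in>carrier G. \<Sum>h1\<in>carrier G. \<Sum>h2\<in>carrier G.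
       (if uf_ract G Gp Gm (uf_plus G Gp Gm g1) (uf_minus G Gp Gm g1) = uf_plus G Gp Gm h1
           \<and> g1 \<otimes>\<^bsub>G\<^esub> uf_minus G Gp Gm h1 = k1
           \<and> uf_ract G Gp Gm (uf_plus G Gp Gm g2) (uf_minus G Gp Gm g2) = uf_plus G Gp Gm h2
           \<and> g2 \<otimes>\<^bsub>G\<^esub> uf_minus G Gp Gm h2 = k2
        then A (g1, g2) * B (h1, h2) else 0))"

text \<open>Unit 1 \<otimes> 1 = (\<Sum>_{u\<in>G_+}{u}) \<otimes> (\<Sum>_{v\<in>G_+}{v}).\<close>
definition ht_one :: "'a set \<Rightarrow> ('a \<times> 'a \<Rightarrow> complex)" where
  "ht_one Gp = (\<lambda>(g, h). if g \<in> Gp \<and> h \<in> Gp then 1 else 0)"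

definition ht_invertible :: "('a, 'b) monoid_scheme \<Rightarrow> 'a set \<Rightarrow> 'a set \<Rightarrow> ('a \<times> 'a \<Rightarrow> complex) \<Rightarrow> bool" where
  "ht_invertible G Gp Gm A \<longleftrightarrow> (\<exists>B. ht_elem G B \<and> ht_mult G Gp Gm A B = ht_one Gp \<and> ht_mult G Gp Gm B A = ht_one Gp)"

definition ht_positive :: "('a \<times> 'a \<Rightarrow> complex) \<Rightarrow> bool" where
  "ht_positive A \<longleftrightarrow> (\<forall>p. A p \<in> \<real> \<and> 0 \<le> Re (A p))"

end

(* H(G;G_+,G_-) is the algebra of the action groupoid of G_- acting on G_+ from the right:
   the basis element {g} is an arrow from g_+ to uf_target g = (g_+)^(g_-), the product {g}{h}
   is the composite {g h_-} when uf_target g = h_+ and zero otherwise, and the unit is the sum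
   of the identities {u}, u in G_+.  The same holds for the tensor square, with pairs.

   As R and R^-1 have non-negative coefficients, no cancellation occurs in their products.
   So R R^-1 = 1 yields, over every identity (a1,a2), an arrow of the support of R starting
   at (a1,a2) together with an arrow of R^-1 composing with it to (a1,a2); and R^-1 R = 1 shows
   that every arrow of the support of R starting at (a1,a2) composes with that inverse arrow to
   an identity, hence is the same arrow. *)

theory Submission
  imports Defs "HOL-Library.Complex_Order"
begin

lemma bij_betw_if_ex1:
  assumes "f ` A \<subseteq> B" "\<And>b. b \<in> B \<Longrightarrow> \<exists>!a. a \<in> A \<and> f a = b"
  shows "bij_betw f A B"
proof (rule bij_betw_imageI)
  show "inj_on f A"
  proof (rule inj_onI)
    fix a a' assume "a \<in> A" "a' \<in> A" "f a = f a'"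
    moreover have "\<exists>!x. x \<in> A \<and> f x = f a"
      using assms \<open>a \<in> A\<close> by blast
    ultimately show "a = a'"
      by (metis (mono_tags, lifting))
  qed
  show "f ` A = B"
    using assms by blast
qed

abbreviation uf_target :: "('a, 'b) monoid_scheme \<Rightarrow> 'a set \<Rightarrow> 'a set \<Rightarrow> 'a \<Rightarrow> 'a" where
  "uf_target G Gp Gm g \<equiv> uf_ract G Gp Gm (uf_plus G Gp Gm g) (uf_minus G Gp Gm g)"

locale factorized_group = group G for G (structure) +
  fixes Gp Gm :: "'a set"
  assumes unique_factorization: "unique_factorization G Gp Gm"
begin

abbreviation "fplus \<equiv> uf_plus G Gp Gm"
abbreviation "fminus \<equiv> uf_minus G Gp Gm"
abbreviation "target \<equiv> uf_target G Gp Gm"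

sublocale Gp: subgroup Gp G
  using unique_factorization by (simp add: unique_factorization_def)

sublocale Gm: subgroup Gm G
  using unique_factorization by (simp add: unique_factorization_def)

lemma factorization_unique:
  assumes "u \<in> Gp" "u' \<in> Gp" "x \<in> Gm" "x' \<in> Gm" "u \<otimes> x = u' \<otimes> x'"
  shows "u = u'" "x = x'"
proof -
  have "\<exists>!p. fst p \<in> Gp \<and> snd p \<in> Gm \<and> u \<otimes> x = fst p \<otimes> snd p"
    using unique_factorization assms by (simp add: unique_factorization_def)
  then obtain p where p: "\<And>q. fst q \<in> Gp \<and> snd q \<in> Gm \<and> u \<otimes> x = fst q \<otimes> snd q \<Longrightarrow> q = p"
    by blast
  have "(u, x) = p" "(u', x') = p"
    using assms by (auto intro!: p)
  then show "u = u'" "x = x'" by auto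
qed

lemma factorization_exists:
  assumes "g \<in> carrier G"
  obtains u x where "u \<in> Gp" "x \<in> Gm" "g = u \<otimes> x"
  using unique_factorization assms unfolding unique_factorization_def by blast

lemma fplus_mult [simp]:
  assumes "u \<in> Gp" "x \<in> Gm"
  shows "fplus (u \<otimes> x) = u"
  unfolding uf_plus_def
proof (rule the_equality)
  show "u \<in> Gp \<and> (\<exists>x'\<in>Gm. u \<otimes> x = u \<otimes> x')"
    using assms by blast
next
  fix u' assume "u' \<in> Gp \<and> (\<exists>x'\<in>Gm. u \<otimes> x = u' \<otimes> x')"
  then obtain x' where "u' \<in> Gp" "x' \<in> Gm" "u \<otimes> x = u' \<otimes> x'"
    by blast
  from factorization_unique(1)[OF assms(1) this(1) assms(2) this(2,3)] show "u' = u"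
    by simp
qed

lemma fminus_mult [simp]:
  assumes "u \<in> Gp" "x \<in> Gm"
  shows "fminus (u \<otimes> x) = x"
  unfolding uf_minus_def
proof (rule the_equality)
  show "x \<in> Gm \<and> (\<exists>u'\<in>Gp. u \<otimes> x = u' \<otimes> x)"
    using assms by blast
next
  fix x' assume "x' \<in> Gm \<and> (\<exists>u'\<in>Gp. u \<otimes> x = u' \<otimes> x')"
  then obtain u' where "u' \<in> Gp" "x' \<in> Gm" "u \<otimes> x = u' \<otimes> x'"
    by blast
  from factorization_unique(2)[OF assms(1) this(1) assms(2) this(2,3)] show "x' = x"
    by simp
qed

lemma fplus_closed [simp]: "g \<in> carrier G \<Longrightarrow> fplus g \<in> Gp"
  by (erule factorization_exists) simp

lemma fminus_closed [simp]: "g \<in> carrier G \<Longrightarrow> fminus g \<in> Gm"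
  by (erule factorization_exists) simp

lemma fplus_mult_fminus [simp]: "g \<in> carrier G \<Longrightarrow> fplus g \<otimes> fminus g = g"
  by (erule factorization_exists) simp

lemma factorization_rev_unique:
  assumes "y \<in> Gm" "y' \<in> Gm" "v \<in> Gp" "v' \<in> Gp" "y \<otimes> v = y' \<otimes> v'"
  shows "v = v'"
proof -
  have "inv (y \<otimes> v) = inv (y' \<otimes> v')"
    using assms(5) by simp
  then have "inv v \<otimes> inv y = inv v' \<otimes> inv y'"
    using assms(1-4) by (simp add: inv_mult_group)
  then have "inv v = inv v'"
    by (rule factorization_unique(1)[rotated 4]) (use assms(1-4) in simp_all)
  then show "v = v'"
    using assms(3,4) by (metis Gp.mem_carrier inv_inv)
qed

lemma factorization_rev_exists:
  assumes "g \<in> carrier G"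
  obtains y v where "y \<in> Gm" "v \<in> Gp" "g = y \<otimes> v"
proof -
  obtain u x where ux: "u \<in> Gp" "x \<in> Gm" "inv g = u \<otimes> x"
    using assms by (meson factorization_exists inv_closed)
  then have "inv (inv g) = inv x \<otimes> inv u"
    by (simp add: inv_mult_group)
  then show thesis
    using assms ux(1,2) by (intro that[of "inv x" "inv u"]) simp_all
qed

lemma uf_ract_eqI:
  assumes "u \<in> Gp" "x \<in> Gm" "y \<in> Gm" "v \<in> Gp" "u \<otimes> x = y \<otimes> v"
  shows "uf_ract G Gp Gm u x = v"
  unfolding uf_ract_def
proof (rule the_equality)
  show "v \<in> Gp \<and> (\<exists>y\<in>Gm. u \<otimes> x = y \<otimes> v)"
    using assms by blast
next
  fix v' assume "v' \<in> Gp \<and> (\<exists>y\<in>Gm. u \<otimes> x = y \<otimes> v')"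
  then obtain y' where "v' \<in> Gp" "y' \<in> Gm" "y \<otimes> v = y' \<otimes> v'"
    using assms(5) by auto
  from factorization_rev_unique[OF assms(3) this(2) assms(4) this(1,3)] show "v' = v"
    by simp
qed

lemma uf_ract_inv:
  assumes "u \<in> Gp" "x \<in> Gm"
  shows "uf_ract G Gp Gm (uf_ract G Gp Gm u x) (inv x) = u"
proof -
  have "u \<otimes> x \<in> carrier G"
    using assms by simp
  then obtain y v where yv: "y \<in> Gm" "v \<in> Gp" "u \<otimes> x = y \<otimes> v"
    by (rule factorization_rev_exists)
  have carrier: "u \<in> carrier G" "x \<in> carrier G" "y \<in> carrier G" "v \<in> carrier G"
    using assms yv by auto
  have "u = (y \<otimes> v) \<otimes> inv x"
    using yv(3) carrier by (simp add: inv_solve_right)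
  then have "v \<otimes> inv x = inv y \<otimes> u"
    using carrier by (simp add: inv_solve_left m_assoc)
  then have "uf_ract G Gp Gm v (inv x) = u"
    using assms yv by (intro uf_ract_eqI) auto
  moreover have "uf_ract G Gp Gm u x = v"
    using assms yv by (rule uf_ract_eqI)
  ultimately show ?thesis
    by simp
qed

lemma mult_inv_fminus: "g \<in> carrier G \<Longrightarrow> g \<otimes> inv (fminus g) = fplus g"
  using inv_solve_right[of "fplus g" g "fminus g"] by simp

lemma mult_fminus_in_Gp_iff:
  assumes "g \<in> carrier G" "h \<in> carrier G"
  shows "g \<otimes> fminus h \<in> Gp \<longleftrightarrow> fminus h = inv (fminus g)"
proof
  assume in_Gp: "g \<otimes> fminus h \<in> Gp"
  have "(g \<otimes> fminus h) \<otimes> \<one> = fplus g \<otimes> (fminus g \<otimes> fminus h)"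
    using assms by (simp add: m_assoc [symmetric])
  then have "\<one> = fminus g \<otimes> fminus h"
    by (rule factorization_unique(2)[rotated 4]) (use assms in_Gp in simp_all)
  then have "fminus h \<otimes> fminus g = \<one>"
    using assms inv_comm[of "fminus g" "fminus h"] by simp
  then show "fminus h = inv (fminus g)"
    using assms by (simp add: inv_equality)
next
  assume "fminus h = inv (fminus g)"
  then show "g \<otimes> fminus h \<in> Gp"
    using assms by (simp add: mult_inv_fminus)
qed

lemma composite_in_GpD:
  assumes "g \<in> carrier G" "h \<in> carrier G" "target g = fplus h" "g \<otimes> fminus h \<in> Gp"
  shows "fplus g = g \<otimes> fminus h" "target h = fplus g"
proof -
  have inverse: "fminus h = inv (fminus g)"
    using assms by (simp add: mult_fminus_in_Gp_iff)
  then show "fplus g = g \<otimes> fminus h"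
    using assms(1) by (simp add: mult_inv_fminus)
  show "target h = fplus g"
    using assms inverse uf_ract_inv[of "fplus g" "fminus g"] by simp
qed

lemma eq_if_composites_in_Gp:
  assumes "g \<in> carrier G" "h \<in> carrier G" "x \<in> carrier G"
    and "g \<otimes> fminus h \<in> Gp" "h \<otimes> fminus x \<in> Gp" "fplus x = fplus g"
  shows "x = g"
proof -
  have "fminus x = fminus g"
    using assms by (simp add: mult_fminus_in_Gp_iff)
  then show "x = g"
    using assms(1,3,6) by (metis fplus_mult_fminus)
qed

end

lemma ht_positive_iff_nonneg: "ht_positive A \<longleftrightarrow> (\<forall>p. 0 \<le> A p)"
  by (auto simp: ht_positive_def less_eq_complex_def complex_is_Real_iff)

lemma ht_mult_positive_neq_0_iff:
  assumes "finite (carrier G)" "ht_positive A" "ht_positive B"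
  shows "ht_mult G Gp Gm A B (k1, k2) \<noteq> 0 \<longleftrightarrow>
    (\<exists>g1\<in>carrier G. \<exists>g2\<in>carrier G. \<exists>h1\<in>carrier G. \<exists>h2\<in>carrier G.
       A (g1, g2) \<noteq> 0 \<and> B (h1, h2) \<noteq> 0 \<and>
       uf_target G Gp Gm g1 = uf_plus G Gp Gm h1 \<and> g1 \<otimes>\<^bsub>G\<^esub> uf_minus G Gp Gm h1 = k1 \<and>
       uf_target G Gp Gm g2 = uf_plus G Gp Gm h2 \<and> g2 \<otimes>\<^bsub>G\<^esub> uf_minus G Gp Gm h2 = k2)"
proof -
  have "0 \<le> A p * B q" for p q
    using assms(2,3) mult_nonneg_nonneg unfolding ht_positive_iff_nonneg by blast
  then show ?thesis
    unfolding ht_mult_def using assms(1) by (auto simp: sum_nonneg_eq_0_iff sum_nonneg)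
qed

context factorized_group
begin

lemma ex1_support_fplus_eq:
  assumes "finite (carrier G)" "ht_elem G R" "ht_positive R" "ht_positive S"
    and RS: "ht_mult G Gp Gm R S = ht_one Gp" and SR: "ht_mult G Gp Gm S R = ht_one Gp"
    and "a1 \<in> Gp" "a2 \<in> Gp"
  shows "\<exists>!p. R p \<noteq> 0 \<and> fplus (fst p) = a1 \<and> fplus (snd p) = a2"
proof -
  have "ht_mult G Gp Gm R S (a1, a2) \<noteq> 0"
    using RS assms(7,8) by (simp add: ht_one_def)
  then obtain y1 y2 h1 h2
    where carrier: "y1 \<in> carrier G" "y2 \<in> carrier G" "h1 \<in> carrier G" "h2 \<in> carrier G"
      and nonzero: "R (y1, y2) \<noteq> 0" "S (h1, h2) \<noteq> 0"
      and arrows: "target y1 = fplus h1" "y1 \<otimes> fminus h1 = a1"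
        "target y2 = fplus h2" "y2 \<otimes> fminus h2 = a2"
    by (subst (asm) ht_mult_positive_neq_0_iff[OF assms(1,3,4)]) blast
  have in_Gp: "y1 \<otimes> fminus h1 \<in> Gp" "y2 \<otimes> fminus h2 \<in> Gp"
    using arrows assms(7,8) by simp_all
  note inverse1 = composite_in_GpD[OF carrier(1,3) arrows(1) in_Gp(1)] and
    inverse2 = composite_in_GpD[OF carrier(2,4) arrows(3) in_Gp(2)]
  show ?thesis
  proof (rule ex1I[of _ "(y1, y2)"])
    show "R (y1, y2) \<noteq> 0 \<and> fplus (fst (y1, y2)) = a1 \<and> fplus (snd (y1, y2)) = a2"
      using nonzero inverse1(1) inverse2(1) arrows by simp
  next
    fix p assume p: "R p \<noteq> 0 \<and> fplus (fst p) = a1 \<and> fplus (snd p) = a2"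
    obtain x1 x2 where x: "p = (x1, x2)"
      by (cases p)
    have x_carrier: "x1 \<in> carrier G" "x2 \<in> carrier G"
      using assms(2) p x unfolding ht_elem_def by blast+
    have "target h1 = fplus x1" "target h2 = fplus x2"
      using inverse1 inverse2 arrows p x by simp_all
    with carrier(3,4) x_carrier nonzero(2) p x
    have "ht_mult G Gp Gm S R (h1 \<otimes> fminus x1, h2 \<otimes> fminus x2) \<noteq> 0"
      by (subst ht_mult_positive_neq_0_iff[OF assms(1,4,3)]) blast
    then have "h1 \<otimes> fminus x1 \<in> Gp" "h2 \<otimes> fminus x2 \<in> Gp"
      using SR by (simp_all add: ht_one_def split: if_splits)
    moreover have "fplus x1 = fplus y1" "fplus x2 = fplus y2"
      using inverse1 inverse2 arrows p x by simp_all
    ultimately have "x1 = y1" "x2 = y2"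
      using eq_if_composites_in_Gp carrier x_carrier in_Gp by blast+
    then show "p = (y1, y2)"
      using x by simp
  qed
qed

lemma support_bij_if_positive_inverse:
  assumes "finite (carrier G)" "ht_elem G R" "ht_positive R" "ht_positive S"
    and "ht_mult G Gp Gm R S = ht_one Gp" "ht_mult G Gp Gm S R = ht_one Gp"
  shows "bij_betw (\<lambda>(g, h). (fplus g, fplus h)) {p. R p \<noteq> 0} (Gp \<times> Gp)"
proof (rule bij_betw_if_ex1)
  show "(\<lambda>(g, h). (fplus g, fplus h)) ` {p. R p \<noteq> 0} \<subseteq> Gp \<times> Gp"
  proof (rule image_subsetI)
    fix p assume "p \<in> {p. R p \<noteq> 0}"
    then have "p \<in> carrier G \<times> carrier G"
      using assms(2) unfolding ht_elem_def by blast
    then show "(\<lambda>(g, h). (fplus g, fplus h)) p \<in> Gp \<times> Gp"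
      by auto
  qed
next
  fix a assume "a \<in> Gp \<times> Gp"
  then obtain a1 a2 where "a = (a1, a2)" "a1 \<in> Gp" "a2 \<in> Gp"
    by blast
  then show "\<exists>!p. p \<in> {p. R p \<noteq> 0} \<and> (\<lambda>(g, h). (fplus g, fplus h)) p = a"
    using ex1_support_fplus_eq[OF assms, of a1 a2] by (simp add: case_prod_beta)
qed

end

theorem proposition2:
  fixes G :: "('a, 'b) monoid_scheme" and Gp Gm :: "'a set" and R :: "'a \<times> 'a \<Rightarrow> complex"
  assumes "group G" and "finite (carrier G)"
    and "unique_factorization G Gp Gm"
    and "ht_elem G R" and "ht_positive R"
    and "ht_invertible G Gp Gm R"
    and "\<And>S. ht_elem G S \<Longrightarrow> ht_mult G Gp Gm R S = ht_one Gp \<Longrightarrow> ht_mult G Gp Gm S R = ht_one Gp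
           \<Longrightarrow> ht_positive S"
  shows "\<exists>\<R> r. \<R> \<subseteq> carrier G \<times> carrier G \<and> (\<forall>p\<in>\<R>. (r p :: real) > 0)
     \<and> bij_betw (\<lambda>(g, h). (uf_plus G Gp Gm g, uf_plus G Gp Gm h)) \<R> (Gp \<times> Gp)
     \<and> (\<forall>p. R p = (if p \<in> \<R> then complex_of_real (r p) else 0))"
proof -
  interpret factorized_group G Gp Gm
    using assms(1,3) by (simp add: factorized_group_def factorized_group_axioms_def)
  obtain S where S: "ht_elem G S" "ht_mult G Gp Gm R S = ht_one Gp" "ht_mult G Gp Gm S R = ht_one Gp"
    using assms(6) unfolding ht_invertible_def by blast
  then have "ht_positive S"
    by (rule assms(7))
  then have "bij_betw (\<lambda>(g, h). (fplus g, fplus h)) {p. R p \<noteq> 0} (Gp \<times> Gp)"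
    by (rule support_bij_if_positive_inverse[OF assms(2,4,5) _ S(2,3)])
  moreover have "{p. R p \<noteq> 0} \<subseteq> carrier G \<times> carrier G"
    using assms(4) by (auto simp: ht_elem_def)
  moreover have "0 \<le> R p" for p
    using assms(5) unfolding ht_positive_iff_nonneg by blast
  ultimately show ?thesis
    by (intro exI[of _ "{p. R p \<noteq> 0}"] exI[of _ "\<lambda>p. Re (R p)"])
      (auto simp: less_eq_complex_def complex_eq_iff order_le_less)
qed

end
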